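(* Let $(G,d)$ be a $p$-uniformly convex space with constant $c>0$, $D\subset G$, $T:D\rightrightarrows G$, $y\in D$, $\tau\in(0,1)$, $T_\tau=(1-\tau)\mathrm{Id}\oplus\tau T$, and for $x_+\in T(x)$ let $x_\tau=(1-\tau)x\oplus\tau x_+$. (i) Suppose $T$ is pointwise almost nonexpansive at $y$ on $D$ with violation $\epsilon$ (so $T(y)$ and $T_\tau(y)$ are single points). If for all $x\in D$ and $x_+\in T(x)$ $$\tfrac{\tau}{1-\tau}\psi^{(p,c)}(x,y,x_\tau,T_\tau(y))\le(1-\tau)\tau\psi^{(p,c)}(x,y,x_+,T(y))-\tfrac{2-c}{2}(1-\tau)\tau\big(d(y,x_+)^p+d(x,T(y))^p\big),$$ then $T_\tau$ is pointwise a$\alpha$-fne at $y$ on $D$ with constant $\alpha=1-\tau$ and violation $\epsilon_\tau=\tau\big(2\tau+(1-\tau)c+\epsilon(\tau+\frac c2(1-\tau))-2\big)$. (ii) Suppose $T$ is pointwise a$\alpha$-fne at $y$ on $D$ with constant $\alpha\in(0,1)$ and violation $\epsilon$. If there is $\alpha_\tau\in(0,1)$ such that for all $x\in D$ and $x_+\in T(x)$ $$\tfrac{1-\alpha_\tau}{\alpha_\tau}\psi^{(p,c)}(x,y,x_\tau,T_\tau(y))\le\tau^2\tfrac{1-\alpha}{\alpha}\psi^{(p,c)}(x,y,x_+,T(y))+2(1-\tau)\tau d(x,y)^p-2(1-\tau)\tau\Delta^{(p,c)}(x,y,x_+,T(y))-\tfrac{2-c}{2}(1-\tau)\tau\big(d(y,x_+)^p+d(x,T(y))^p\big),$$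 then $T_\tau$ is pointwise a$\alpha$-fne at $y$ on $D$ with constant $\alpha_\tau$ and violation $\epsilon_\tau=\tau^2\epsilon$.
   Context: $(G,d)$ is uniquely geodesic; $(1-\tau)x\oplus\tau y$ is the point on the geodesic from $x$ to $y$ at distance $\tau d(x,y)$ from $x$; $T_\tau(x)=\{(1-\tau)x\oplus\tau x_+:x_+\in T(x)\}$. $(G,d)$ is $p$-uniformly convex ($p\in(1,\infty)$) with constant $c$ if $d(z,(1-\tau)x\oplus\tau y)^p\le(1-\tau)d(z,x)^p+\tau d(z,y)^p-\frac c2\tau(1-\tau)d(x,y)^p$ for all $\tau,x,y,z$. $\Delta^{(p,c)}(x,y,u,v)=\frac c4\big(d(x,v)^p+d(y,u)^p-d(x,u)^p-d(y,v)^p\big)$; $\psi^{(p,c)}(x,y,u,v)=\frac c2\big(d(x,u)^p+d(y,v)^p+d(u,v)^p+d(x,y)^p-d(y,u)^p-d(x,v)^p\big)$. $T$ is pointwise almost nonexpansive at $y$ on $D$ with violation $\epsilon\ge0$ if $d(x_+,y_+)^p\le(1+\epsilon)d(x,y)^p$ for all $x\in D$, $x_+\in T(x)$, $y_+\in T(y)$; pointwise almost $\alpha$-firmly nonexpansive (a$\alpha$-fne) at $y$ on $D$ with constant $\alpha\in(0,1)$ and violation $\epsilon$ if $d(x_+,y_+)^p\le(1+\epsilon)d(x,y)^p-\frac{1-\alpha}{\alpha}\psi^{(p,c)}(x,y,x_+,y_+)$ for all such $x,x_+,y_+$. Such mappings are single-valued at $y$. *)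

theory Defs
  imports "HOL-Analysis.Analysis"
begin

text \<open>The space (G,d) is the whole type 'a (a metric space), d = dist.\<close>

definition is_geodesic :: "'a::metric_space \<Rightarrow> 'a \<Rightarrow> (real \<Rightarrow> 'a) \<Rightarrow> bool" where
  "is_geodesic x y \<gamma> \<longleftrightarrow> \<gamma> 0 = x \<and> \<gamma> 1 = y \<and>
     (\<forall>s\<in>{0..1}. \<forall>t\<in>{0..1}. dist (\<gamma> s) (\<gamma> t) = \<bar>s - t\<bar> * dist x y)"

definition uniquely_geodesic :: "'a::metric_space itself \<Rightarrow> bool" where
  "uniquely_geodesic _ \<longleftrightarrow> (\<forall>x y::'a. (\<exists>\<gamma>. is_geodesic x y \<gamma>) \<and>
     (\<forall>\<gamma>1 \<gamma>2. is_geodesic x y \<gamma>1 \<and> is_geodesic x y \<gamma>2 \<longrightarrow> (\<forall>t\<in>{0..1}. \<gamma>1 t = \<gamma>2 t)))"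

text \<open>(1-tau) x \<oplus> tau y : the point of the geodesic from x to y at distance tau d(x,y) from x.\<close>
definition geo :: "'a::metric_space \<Rightarrow> 'a \<Rightarrow> real \<Rightarrow> 'a" where
  "geo x y \<tau> = (SOME \<gamma>. is_geodesic x y \<gamma>) \<tau>"

definition p_uniformly_convex :: "'a::metric_space itself \<Rightarrow> real \<Rightarrow> real \<Rightarrow> bool" where
  "p_uniformly_convex _ p c \<longleftrightarrow> 1 < p \<and>
     (\<forall>\<tau>\<in>{0..1}. \<forall>x y z::'a.
        dist z (geo x y \<tau>) powr p \<le> (1 - \<tau>) * dist z x powr p + \<tau> * dist z y powr p
          - c / 2 * \<tau> * (1 - \<tau>) * dist x y powr p)"

definition Tau :: "('a::metric_space \<Rightarrow> 'a set) \<Rightarrow> real \<Rightarrow> 'a \<Rightarrow> 'a set" where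
  "Tau T \<tau> x = {geo x xp \<tau> | xp. xp \<in> T x}"

definition Delta :: "real \<Rightarrow> real \<Rightarrow> 'a::metric_space \<Rightarrow> 'a \<Rightarrow> 'a \<Rightarrow> 'a \<Rightarrow> real" where
  "Delta p c x y u v = c / 4 * (dist x v powr p + dist y u powr p - dist x u powr p - dist y v powr p)"

definition psi :: "real \<Rightarrow> real \<Rightarrow> 'a::metric_space \<Rightarrow> 'a \<Rightarrow> 'a \<Rightarrow> 'a \<Rightarrow> real" where
  "psi p c x y u v = c / 2 * (dist x u powr p + dist y v powr p + dist u v powr p + dist x y powr p
     - dist y u powr p - dist x v powr p)"

definition pointwise_almost_ne :: "real \<Rightarrow> ('a::metric_space \<Rightarrow> 'a set) \<Rightarrow> 'a set \<Rightarrow> 'a \<Rightarrow> real \<Rightarrow> bool" where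
  "pointwise_almost_ne p T D y \<epsilon> \<longleftrightarrow>
     (\<forall>x\<in>D. \<forall>xp\<in>T x. \<forall>yp\<in>T y. dist xp yp powr p \<le> (1 + \<epsilon>) * dist x y powr p)"

definition pointwise_almost_fne ::
  "real \<Rightarrow> real \<Rightarrow> ('a::metric_space \<Rightarrow> 'a set) \<Rightarrow> 'a set \<Rightarrow> 'a \<Rightarrow> real \<Rightarrow> real \<Rightarrow> bool" where
  "pointwise_almost_fne p c T D y \<alpha> \<epsilon> \<longleftrightarrow> 0 < \<alpha> \<and> \<alpha> < 1 \<and>
     (\<forall>x\<in>D. \<forall>xp\<in>T x. \<forall>yp\<in>T y. dist xp yp powr p \<le> (1 + \<epsilon>) * dist x y powr p
         - (1 - \<alpha>) / \<alpha> * psi p c x y xp yp)"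

end

theory Submission
  imports Defs
begin

text \<open>Applying p-uniform convexity three times (on the geodesic from \<open>x\<close> to \<open>x\<^sub>+\<close> seen from
  \<open>y\<^sub>\<tau>\<close>, and on the geodesic from \<open>y\<close> to \<open>y\<^sub>+\<close> seen from \<open>x\<close> and from \<open>x\<^sub>+\<close>) bounds
  \<open>d(x\<^sub>\<tau>, y\<^sub>\<tau>)\<^sup>p\<close> by a combination of the six distances among \<open>x, y, x\<^sub>+, y\<^sub>+\<close>. Adding the
  hypothesised bound on \<open>\<psi>\<close> at the averaged points, all cross terms cancel against those in
  \<open>\<psi>\<close> and \<open>\<Delta>\<close>; what remains is \<open>d(x,y)\<^sup>p\<close> together with \<open>d(x\<^sub>+,y\<^sub>+)\<^sup>p\<close>, which the
  regularity of \<open>T\<close> at \<open>y\<close> controls.\<close>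

lemma dist_geo_geo_powr_le:
  fixes x y xp yp :: "'a::metric_space" and p c \<tau> :: real
  assumes convex: "p_uniformly_convex TYPE('a) p c" and "0 \<le> \<tau>" "\<tau> \<le> 1"
  shows "dist (geo x xp \<tau>) (geo y yp \<tau>) powr p \<le>
     (1 - \<tau>)\<^sup>2 * dist x y powr p + (1 - \<tau>) * \<tau> * (dist x yp powr p + dist y xp powr p)
     + \<tau>\<^sup>2 * dist xp yp powr p - c / 2 * \<tau> * (1 - \<tau>) * (dist x xp powr p + dist y yp powr p)"
proof -
  let ?yt = "geo y yp \<tau>"
  have uc: "\<And>u v z::'a. dist z (geo u v \<tau>) powr p \<le> (1 - \<tau>) * dist z u powr p
      + \<tau> * dist z v powr p - c / 2 * \<tau> * (1 - \<tau>) * dist u v powr p"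
    using assms unfolding p_uniformly_convex_def by auto
  have from_yt: "dist (geo x xp \<tau>) ?yt powr p \<le> (1 - \<tau>) * dist x ?yt powr p
      + \<tau> * dist xp ?yt powr p - c / 2 * \<tau> * (1 - \<tau>) * dist x xp powr p"
    using uc[of ?yt x xp] by (simp add: dist_commute)
  have from_x: "(1 - \<tau>) * dist x ?yt powr p \<le> (1 - \<tau>) * ((1 - \<tau>) * dist x y powr p
      + \<tau> * dist x yp powr p - c / 2 * \<tau> * (1 - \<tau>) * dist y yp powr p)"
    using uc \<open>\<tau> \<le> 1\<close> by (intro mult_left_mono) auto
  have from_xp: "\<tau> * dist xp ?yt powr p \<le> \<tau> * ((1 - \<tau>) * dist xp y powr p
      + \<tau> * dist xp yp powr p - c / 2 * \<tau> * (1 - \<tau>) * dist y yp powr p)"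
    using uc \<open>0 \<le> \<tau>\<close> by (intro mult_left_mono) auto
  have expand: "(1 - \<tau>) * ((1 - \<tau>) * dist x y powr p + \<tau> * dist x yp powr p
        - c / 2 * \<tau> * (1 - \<tau>) * dist y yp powr p)
      + \<tau> * ((1 - \<tau>) * dist xp y powr p + \<tau> * dist xp yp powr p
        - c / 2 * \<tau> * (1 - \<tau>) * dist y yp powr p) - c / 2 * \<tau> * (1 - \<tau>) * dist x xp powr p
      = (1 - \<tau>)\<^sup>2 * dist x y powr p + (1 - \<tau>) * \<tau> * (dist x yp powr p + dist y xp powr p)
      + \<tau>\<^sup>2 * dist xp yp powr p - c / 2 * \<tau> * (1 - \<tau>) * (dist x xp powr p + dist y yp powr p)"
    by (simp add: dist_commute power2_eq_square field_simps)
  show ?thesis using from_yt from_x from_xp expand by linarith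
qed

lemma pointwise_almost_fne_Tau_iff:
  "pointwise_almost_fne p c (Tau T \<tau>) D y \<alpha> \<epsilon> \<longleftrightarrow> 0 < \<alpha> \<and> \<alpha> < 1 \<and>
     (\<forall>x\<in>D. \<forall>xp\<in>T x. \<forall>yp\<in>T y. dist (geo x xp \<tau>) (geo y yp \<tau>) powr p
        \<le> (1 + \<epsilon>) * dist x y powr p - (1 - \<alpha>) / \<alpha> * psi p c x y (geo x xp \<tau>) (geo y yp \<tau>))"
  unfolding pointwise_almost_fne_def Tau_def by blast

lemma pointwise_almost_fne_Tau_of_almost_ne:
  fixes D :: "'a::metric_space set"
  assumes convex: "p_uniformly_convex TYPE('a) p c" and "0 \<le> c" "0 < \<tau>" "\<tau> < 1"
    and ne: "pointwise_almost_ne p T D y \<epsilon>"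
    and psi_le: "\<forall>x\<in>D. \<forall>xp\<in>T x. \<forall>yp\<in>T y.
         \<tau> / (1 - \<tau>) * psi p c x y (geo x xp \<tau>) (geo y yp \<tau>)
           \<le> (1 - \<tau>) * \<tau> * psi p c x y xp yp
              - (2 - c) / 2 * (1 - \<tau>) * \<tau> * (dist y xp powr p + dist x yp powr p)"
  shows "pointwise_almost_fne p c (Tau T \<tau>) D y (1 - \<tau>)
           (\<tau> * (2 * \<tau> + (1 - \<tau>) * c + \<epsilon> * (\<tau> + c / 2 * (1 - \<tau>)) - 2))"
  unfolding pointwise_almost_fne_Tau_iff
proof (intro conjI ballI)
  show "0 < 1 - \<tau>" "1 - \<tau> < 1" using assms by auto
  fix x xp yp assume "x \<in> D" "xp \<in> T x" "yp \<in> T y"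
  let ?k = "\<tau>\<^sup>2 + (1 - \<tau>) * \<tau> * c / 2"
  let ?psi\<tau> = "psi p c x y (geo x xp \<tau>) (geo y yp \<tau>)"
  have "dist xp yp powr p \<le> (1 + \<epsilon>) * dist x y powr p"
    using ne \<open>x \<in> D\<close> \<open>xp \<in> T x\<close> \<open>yp \<in> T y\<close> unfolding pointwise_almost_ne_def by blast
  moreover have "0 \<le> ?k" using assms by simp
  ultimately have T_ne: "?k * dist xp yp powr p \<le> ?k * ((1 + \<epsilon>) * dist x y powr p)"
    by (simp add: mult_left_mono)
  have cancel: "(1 - \<tau>)\<^sup>2 * dist x y powr p + (1 - \<tau>) * \<tau> * (dist x yp powr p + dist y xp powr p)
      + \<tau>\<^sup>2 * dist xp yp powr p - c / 2 * \<tau> * (1 - \<tau>) * (dist x xp powr p + dist y yp powr p)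
      + ((1 - \<tau>) * \<tau> * psi p c x y xp yp
         - (2 - c) / 2 * (1 - \<tau>) * \<tau> * (dist y xp powr p + dist x yp powr p))
    = ((1 - \<tau>)\<^sup>2 + (1 - \<tau>) * \<tau> * c / 2) * dist x y powr p + ?k * dist xp yp powr p"
    unfolding psi_def by (simp add: dist_commute power2_eq_square field_simps)
  have collect: "((1 - \<tau>)\<^sup>2 + (1 - \<tau>) * \<tau> * c / 2) * dist x y powr p
      + ?k * ((1 + \<epsilon>) * dist x y powr p)
    = (1 + \<tau> * (2 * \<tau> + (1 - \<tau>) * c + \<epsilon> * (\<tau> + c / 2 * (1 - \<tau>)) - 2)) * dist x y powr p"
    by (simp add: power2_eq_square field_simps)
  have "(1 - (1 - \<tau>)) / (1 - \<tau>) = \<tau> / (1 - \<tau>)" by simp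
  then show "dist (geo x xp \<tau>) (geo y yp \<tau>) powr p
      \<le> (1 + \<tau> * (2 * \<tau> + (1 - \<tau>) * c + \<epsilon> * (\<tau> + c / 2 * (1 - \<tau>)) - 2)) * dist x y powr p
         - (1 - (1 - \<tau>)) / (1 - \<tau>) * ?psi\<tau>"
    using dist_geo_geo_powr_le[OF convex, of \<tau> x xp y yp] assms T_ne cancel collect
      psi_le \<open>x \<in> D\<close> \<open>xp \<in> T x\<close> \<open>yp \<in> T y\<close>
    by fastforce
qed

lemma pointwise_almost_fne_Tau_of_almost_fne:
  fixes D :: "'a::metric_space set"
  assumes convex: "p_uniformly_convex TYPE('a) p c" and "0 \<le> \<tau>" "\<tau> \<le> 1"
    and fne: "pointwise_almost_fne p c T D y \<alpha> \<epsilon>" and "0 < \<alpha>\<tau>" "\<alpha>\<tau> < 1"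
    and psi_le: "\<forall>x\<in>D. \<forall>xp\<in>T x. \<forall>yp\<in>T y.
         (1 - \<alpha>\<tau>) / \<alpha>\<tau> * psi p c x y (geo x xp \<tau>) (geo y yp \<tau>)
           \<le> \<tau>\<^sup>2 * ((1 - \<alpha>) / \<alpha>) * psi p c x y xp yp
              + 2 * (1 - \<tau>) * \<tau> * dist x y powr p
              - 2 * (1 - \<tau>) * \<tau> * Delta p c x y xp yp
              - (2 - c) / 2 * (1 - \<tau>) * \<tau> * (dist y xp powr p + dist x yp powr p)"
  shows "pointwise_almost_fne p c (Tau T \<tau>) D y \<alpha>\<tau> (\<tau>\<^sup>2 * \<epsilon>)"
  unfolding pointwise_almost_fne_Tau_iff
proof (intro conjI ballI)
  show "0 < \<alpha>\<tau>" "\<alpha>\<tau> < 1" by fact+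
  fix x xp yp assume "x \<in> D" "xp \<in> T x" "yp \<in> T y"
  have "dist xp yp powr p \<le> (1 + \<epsilon>) * dist x y powr p - (1 - \<alpha>) / \<alpha> * psi p c x y xp yp"
    using fne \<open>x \<in> D\<close> \<open>xp \<in> T x\<close> \<open>yp \<in> T y\<close> unfolding pointwise_almost_fne_def by blast
  then have T_fne: "\<tau>\<^sup>2 * dist xp yp powr p
      \<le> \<tau>\<^sup>2 * ((1 + \<epsilon>) * dist x y powr p - (1 - \<alpha>) / \<alpha> * psi p c x y xp yp)"
    by (rule mult_left_mono) simp
  have cancel: "(1 - \<tau>)\<^sup>2 * dist x y powr p + (1 - \<tau>) * \<tau> * (dist x yp powr p + dist y xp powr p)
      + \<tau>\<^sup>2 * ((1 + \<epsilon>) * dist x y powr p - (1 - \<alpha>) / \<alpha> * psi p c x y xp yp)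
      - c / 2 * \<tau> * (1 - \<tau>) * (dist x xp powr p + dist y yp powr p)
      + (\<tau>\<^sup>2 * ((1 - \<alpha>) / \<alpha>) * psi p c x y xp yp
         + 2 * (1 - \<tau>) * \<tau> * dist x y powr p
         - 2 * (1 - \<tau>) * \<tau> * Delta p c x y xp yp
         - (2 - c) / 2 * (1 - \<tau>) * \<tau> * (dist y xp powr p + dist x yp powr p))
    = (1 + \<tau>\<^sup>2 * \<epsilon>) * dist x y powr p"
    unfolding Delta_def by (simp add: dist_commute power2_eq_square field_simps)
  show "dist (geo x xp \<tau>) (geo y yp \<tau>) powr p
      \<le> (1 + \<tau>\<^sup>2 * \<epsilon>) * dist x y powr p - (1 - \<alpha>\<tau>) / \<alpha>\<tau> * psi p c x y (geo x xp \<tau>) (geo y yp \<tau>)"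
    using dist_geo_geo_powr_le[OF convex \<open>0 \<le> \<tau>\<close> \<open>\<tau> \<le> 1\<close>, of x xp y yp] T_fne cancel
      psi_le \<open>x \<in> D\<close> \<open>xp \<in> T x\<close> \<open>yp \<in> T y\<close>
    by fastforce
qed

theorem mainTheorem6:
  fixes p c \<tau> \<epsilon> :: real and D :: "'a::metric_space set" and T :: "'a \<Rightarrow> 'a set" and y :: 'a
  assumes "uniquely_geodesic TYPE('a)"
    and "p_uniformly_convex TYPE('a) p c" and "0 < c"
    and "y \<in> D" and "0 < \<tau>" and "\<tau> < 1" and "0 \<le> \<epsilon>"
  shows
   "(pointwise_almost_ne p T D y \<epsilon> \<and>
      (\<forall>x\<in>D. \<forall>xp\<in>T x. \<forall>yp\<in>T y.
         \<tau> / (1 - \<tau>) * psi p c x y (geo x xp \<tau>) (geo y yp \<tau>)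
           \<le> (1 - \<tau>) * \<tau> * psi p c x y xp yp
              - (2 - c) / 2 * (1 - \<tau>) * \<tau> * (dist y xp powr p + dist x yp powr p))
     \<longrightarrow> pointwise_almost_fne p c (Tau T \<tau>) D y (1 - \<tau>)
           (\<tau> * (2 * \<tau> + (1 - \<tau>) * c + \<epsilon> * (\<tau> + c / 2 * (1 - \<tau>)) - 2)))
    \<and>
    (\<forall>\<alpha> \<alpha>\<tau>. pointwise_almost_fne p c T D y \<alpha> \<epsilon> \<and> 0 < \<alpha>\<tau> \<and> \<alpha>\<tau> < 1 \<and>
      (\<forall>x\<in>D. \<forall>xp\<in>T x. \<forall>yp\<in>T y.
         (1 - \<alpha>\<tau>) / \<alpha>\<tau> * psi p c x y (geo x xp \<tau>) (geo y yp \<tau>)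
           \<le> \<tau>^2 * ((1 - \<alpha>) / \<alpha>) * psi p c x y xp yp
              + 2 * (1 - \<tau>) * \<tau> * dist x y powr p
              - 2 * (1 - \<tau>) * \<tau> * Delta p c x y xp yp
              - (2 - c) / 2 * (1 - \<tau>) * \<tau> * (dist y xp powr p + dist x yp powr p))
     \<longrightarrow> pointwise_almost_fne p c (Tau T \<tau>) D y \<alpha>\<tau> (\<tau>^2 * \<epsilon>))"
proof -
  have "0 \<le> c" "0 \<le> \<tau>" "\<tau> \<le> 1" using assms by auto
  then show ?thesis
    using pointwise_almost_fne_Tau_of_almost_ne[OF assms(2)]
      pointwise_almost_fne_Tau_of_almost_fne[OF assms(2)] assms(5,6)
    by blast
qed

end
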